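(* Let $C$ be a field, let $W$ be a $C$-vector space of finite dimension $r=\dim W$, and let $n\geq 1$ and $\ell\leq r$ be positive integers. Suppose that for each $i=1,\dots,n$ we are given subspaces $W_{i,1},\dots,W_{i,\ell}$ of $W$ such that $W=W_{i,1}\oplus W_{i,2}\oplus\cdots\oplus W_{i,\ell}$ (direct sum). For a tuple $\mathbf j=(j_1,\dots,j_n)\in\{1,\dots,\ell\}^n$ put $W_{\mathbf j}:=W_{1,j_1}\cap W_{2,j_2}\cap\cdots\cap W_{n,j_n}$. Then there are at most $r$ distinct tuples $\mathbf j\in\{1,\dots,\ell\}^n$ such that $W_{\mathbf j}\neq\{0\}$.
   Context: In the paper $C$ is an algebraically closed subfield of $\mathbb C$; the lemma is a statement of linear algebra over $C$. *)

theory Defs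
  imports Complex_Main "HOL-Library.FuncSet"
begin

definition is_direct_sum ::
  "('a::field \<Rightarrow> 'v::ab_group_add \<Rightarrow> 'v) \<Rightarrow> (nat \<Rightarrow> 'v set) \<Rightarrow> nat \<Rightarrow> bool" where
  "is_direct_sum scale U l \<longleftrightarrow>
     (\<forall>j\<in>{1..l}. module.subspace scale (U j)) \<and>
     (\<forall>w. \<exists>!u. u \<in> ({1..l} \<rightarrow>\<^sub>E UNIV) \<and> (\<forall>j\<in>{1..l}. u j \<in> U j) \<and> w = (\<Sum>j\<in>{1..l}. u j))"

end

theory Submission
  imports Defs
begin

text \<open>Subspaces that form an independent family (a vanishing sum of vectors taken one from
  each is trivial) carry nonzero representatives that are linearly independent, so there are
  at most dim W of them. The subspaces W_j = W_{1,j_1} \<inter> ... \<inter> W_{n,j_n} form such a family: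
  given a vanishing sum of vectors w_j \<in> W_j and a fixed tuple j0, projecting onto the
  j0(i)-th summand of the i-th decomposition keeps exactly the terms with j(i) = j0(i), so
  the sum over all j agreeing with j0 in the first m coordinates still vanishes; for m = n
  this sum is w_j0 alone.\<close>

definition direct_sum_component :: "(nat \<Rightarrow> 'v::ab_group_add set) \<Rightarrow> nat \<Rightarrow> 'v \<Rightarrow> nat \<Rightarrow> 'v" where
  "direct_sum_component U l w =
     (THE u. u \<in> ({1..l} \<rightarrow>\<^sub>E UNIV) \<and> (\<forall>j\<in>{1..l}. u j \<in> U j) \<and> w = (\<Sum>j\<in>{1..l}. u j))"

lemma direct_sum_component:
  assumes "is_direct_sum scale U l"
  shows "direct_sum_component U l w \<in> ({1..l} \<rightarrow>\<^sub>E UNIV)"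
    and "\<forall>j\<in>{1..l}. direct_sum_component U l w j \<in> U j"
    and "w = (\<Sum>j\<in>{1..l}. direct_sum_component U l w j)"
proof -
  have "\<exists>!u. u \<in> ({1..l} \<rightarrow>\<^sub>E UNIV) \<and> (\<forall>j\<in>{1..l}. u j \<in> U j) \<and> w = (\<Sum>j\<in>{1..l}. u j)"
    using assms by (simp add: is_direct_sum_def)
  from theI'[OF this] show "direct_sum_component U l w \<in> ({1..l} \<rightarrow>\<^sub>E UNIV)"
    and "\<forall>j\<in>{1..l}. direct_sum_component U l w j \<in> U j"
    and "w = (\<Sum>j\<in>{1..l}. direct_sum_component U l w j)"
    unfolding direct_sum_component_def by blast+
qed

lemma direct_sum_component_unique:
  assumes "is_direct_sum scale U l"
    and "u \<in> ({1..l} \<rightarrow>\<^sub>E UNIV)" "\<forall>j\<in>{1..l}. u j \<in> U j" "w = (\<Sum>j\<in>{1..l}. u j)"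
  shows "direct_sum_component U l w = u"
  unfolding direct_sum_component_def
  by (rule the1_equality) (use assms in \<open>auto simp: is_direct_sum_def\<close>)

context vector_space
begin

lemma direct_sum_component_add:
  assumes ds: "is_direct_sum scale U l" and k: "k \<in> {1..l}"
  shows "direct_sum_component U l (x + y) k =
         direct_sum_component U l x k + direct_sum_component U l y k"
proof -
  let ?u = "direct_sum_component U l x" and ?v = "direct_sum_component U l y"
  have "direct_sum_component U l (x + y) = (\<lambda>j\<in>{1..l}. ?u j + ?v j)"
  proof (rule direct_sum_component_unique[OF ds])
    have "\<forall>j\<in>{1..l}. subspace (U j)" using ds by (simp add: is_direct_sum_def)
    then show "\<forall>j\<in>{1..l}. (\<lambda>j\<in>{1..l}. ?u j + ?v j) j \<in> U j"
      using direct_sum_component(2)[OF ds] by (simp add: subspace_add)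
    show "x + y = (\<Sum>j\<in>{1..l}. (\<lambda>j\<in>{1..l}. ?u j + ?v j) j)"
      using direct_sum_component(3)[OF ds, of x] direct_sum_component(3)[OF ds, of y]
      by (simp add: sum.distrib)
  qed simp
  then show ?thesis using k by simp
qed

lemma direct_sum_component_zero:
  assumes "is_direct_sum scale U l" and "k \<in> {1..l}"
  shows "direct_sum_component U l 0 k = 0"
  using direct_sum_component_add[OF assms, of 0 0] by simp

lemma direct_sum_component_sum:
  assumes ds: "is_direct_sum scale U l" and k: "k \<in> {1..l}"
  shows "direct_sum_component U l (\<Sum>j\<in>S. f j) k = (\<Sum>j\<in>S. direct_sum_component U l (f j) k)"
  by (induction S rule: infinite_finite_induct)
    (simp_all add: direct_sum_component_zero[OF ds k] direct_sum_component_add[OF ds k])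

lemma direct_sum_component_mem:
  assumes ds: "is_direct_sum scale U l" and k: "k \<in> {1..l}" and k': "k' \<in> {1..l}"
    and x: "x \<in> U k'"
  shows "direct_sum_component U l x k = (if k = k' then x else 0)"
proof -
  let ?u = "\<lambda>j\<in>{1..l}. if j = k' then x else 0"
  have "direct_sum_component U l x = ?u"
  proof (rule direct_sum_component_unique[OF ds])
    show "\<forall>j\<in>{1..l}. ?u j \<in> U j"
      using ds x by (simp add: is_direct_sum_def subspace_0)
    have "(\<Sum>j\<in>{1..l}. ?u j) = (\<Sum>j\<in>{1..l}. if j = k' then x else 0)"
      by (rule sum.cong) auto
    then show "x = (\<Sum>j\<in>{1..l}. ?u j)" using k' by simp
  qed simp
  then show ?thesis using k by simp
qed

lemma direct_sum_fibre_sum_eq_0: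
  assumes ds: "is_direct_sum scale U l" and fin: "finite S"
    and c: "\<forall>j\<in>S. c j \<in> {1..l} \<and> w j \<in> U (c j)"
    and sum0: "(\<Sum>j\<in>S. w j) = 0" and k: "k \<in> {1..l}"
  shows "(\<Sum>j\<in>{j\<in>S. c j = k}. w j) = 0"
proof -
  have "(\<Sum>j\<in>{j\<in>S. c j = k}. w j) = (\<Sum>j\<in>S. if c j = k then w j else 0)"
    using fin by (rule sum.inter_filter)
  also have "\<dots> = (\<Sum>j\<in>S. direct_sum_component U l (w j) k)"
  proof (rule sum.cong)
    fix j assume "j \<in> S"
    then show "(if c j = k then w j else 0) = direct_sum_component U l (w j) k"
      using c direct_sum_component_mem[OF ds k, of "c j" "w j"] by auto
  qed simp
  also have "\<dots> = direct_sum_component U l 0 k"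
    by (subst sum0[symmetric]) (rule direct_sum_component_sum[OF ds k, symmetric])
  also have "\<dots> = 0"
    by (rule direct_sum_component_zero[OF ds k])
  finally show ?thesis .
qed

lemma direct_sum_intersections_independent:
  fixes W :: "nat \<Rightarrow> nat \<Rightarrow> 'b set"
  assumes ds: "\<forall>i\<in>{1..n}. is_direct_sum scale (W i) l"
    and S: "S \<subseteq> {1..n} \<rightarrow>\<^sub>E {1..l}" and fin: "finite S"
    and w: "\<forall>j\<in>S. w j \<in> (\<Inter>i\<in>{1..n}. W i (j i))"
    and sum0: "(\<Sum>j\<in>S. w j) = 0"
  shows "\<forall>j\<in>S. w j = 0"
proof
  fix j0 assume j0: "j0 \<in> S"
  let ?S = "\<lambda>m. {j\<in>S. \<forall>i\<in>{1..m}. j i = j0 i}"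
  have partial_sum: "m \<le> n \<Longrightarrow> (\<Sum>j\<in>?S m. w j) = 0" for m
  proof (induction m)
    case (Suc m)
    have "?S (Suc m) = {j \<in> ?S m. j (Suc m) = j0 (Suc m)}"
      by (auto simp: le_Suc_eq)
    moreover have "(\<Sum>j\<in>{j \<in> ?S m. j (Suc m) = j0 (Suc m)}. w j) = 0"
    proof (rule direct_sum_fibre_sum_eq_0)
      show "is_direct_sum scale (W (Suc m)) l" using ds Suc.prems by simp
      show "finite (?S m)" using fin by simp
      show "\<forall>j\<in>?S m. j (Suc m) \<in> {1..l} \<and> w j \<in> W (Suc m) (j (Suc m))"
        using S w Suc.prems by fastforce
      show "(\<Sum>j\<in>?S m. w j) = 0" using Suc by simp
      show "j0 (Suc m) \<in> {1..l}" using S j0 Suc.prems by fastforce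
    qed
    ultimately show ?case by simp
  qed (simp add: sum0)
  have Sn: "?S n = {j0}"
  proof (intro equalityI subsetI)
    fix j assume j: "j \<in> ?S n"
    have "j \<in> {1..n} \<rightarrow>\<^sub>E {1..l}" "j0 \<in> {1..n} \<rightarrow>\<^sub>E {1..l}"
      using S j j0 by blast+
    then have "j = j0" by (rule PiE_ext) (use j in simp)
    then show "j \<in> {j0}" by simp
  qed (use j0 in simp)
  show "w j0 = 0"
    using partial_sum[OF order_refl] unfolding Sn by simp
qed

end

context finite_dimensional_vector_space
begin

lemma card_le_dim_if_independent_subspaces:
  assumes fin: "finite S"
    and sub: "\<And>j. j \<in> S \<Longrightarrow> subspace (V j)"
    and nontrivial: "\<And>j. j \<in> S \<Longrightarrow> V j \<noteq> {0}"
    and indep: "\<And>w. \<forall>j\<in>S. w j \<in> V j \<Longrightarrow> (\<Sum>j\<in>S. w j) = 0 \<Longrightarrow> \<forall>j\<in>S. w j = 0"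
  shows "card S \<le> dim UNIV"
proof -
  define v where "v j = (SOME x. x \<in> V j \<and> x \<noteq> 0)" for j
  have v: "v j \<in> V j \<and> v j \<noteq> 0" if j: "j \<in> S" for j
  proof -
    have "\<exists>x. x \<in> V j \<and> x \<noteq> 0"
      using nontrivial[OF j] subspace_0[OF sub[OF j]] by blast
    then show ?thesis unfolding v_def by (rule someI_ex)
  qed
  have inj: "inj_on v S"
  proof (rule inj_onI, rule ccontr)
    fix a b assume a: "a \<in> S" and b: "b \<in> S" and eq: "v a = v b" and "a \<noteq> b"
    define w where "w j = (if j = a then v a else 0) - (if j = b then v b else 0)" for j
    have "\<forall>j\<in>S. w j \<in> V j"
      using v sub by (auto simp: w_def subspace_diff subspace_neg subspace_0)
    moreover have "(\<Sum>j\<in>S. w j) = 0"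
      using fin a b eq by (simp add: w_def sum_subtractf)
    ultimately have "w a = 0" using indep a by blast
    then show False using v[OF a] \<open>a \<noteq> b\<close> by (simp add: w_def)
  qed
  have "independent (v ` S)"
  proof (rule independent_if_scalars_zero)
    fix f x assume sum0: "(\<Sum>x\<in>v ` S. f x *s x) = 0" and "x \<in> v ` S"
    then obtain j where j: "j \<in> S" and x: "x = v j" by blast
    have "\<forall>j\<in>S. f (v j) *s v j \<in> V j" using v sub subspace_scale by blast
    moreover have "(\<Sum>j\<in>S. f (v j) *s v j) = 0"
      using sum0 by (simp add: sum.reindex[OF inj])
    ultimately have "f (v j) *s v j = 0" using indep[of "\<lambda>j. f (v j) *s v j"] j by blast
    then show "f x = 0" using v[OF j] x by simp
  qed (use fin in simp)
  then have "card (v ` S) \<le> dim UNIV"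
    by (intro independent_card_le_dim) simp_all
  then show ?thesis by (simp add: card_image[OF inj])
qed

end

theorem lemma1:
  fixes scale :: "'a::field \<Rightarrow> 'v::ab_group_add \<Rightarrow> 'v"
    and Basis :: "'v set"
    and Wsub :: "nat \<Rightarrow> nat \<Rightarrow> 'v set"
    and n l r :: nat
  assumes fd: "finite_dimensional_vector_space scale Basis"
    and r_def: "r = vector_space.dim scale (UNIV :: 'v set)"
    and n_pos: "n \<ge> 1"
    and l_pos: "l \<ge> 1"
    and l_le: "l \<le> r"
    and dsum: "\<forall>i\<in>{1..n}. is_direct_sum scale (Wsub i) l"
  shows "card {j \<in> {1..n} \<rightarrow>\<^sub>E {1..l}. (\<Inter>i\<in>{1..n}. Wsub i (j i)) \<noteq> {0}} \<le> r"
proof -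
  interpret finite_dimensional_vector_space scale Basis by (rule fd)
  let ?S = "{j \<in> {1..n} \<rightarrow>\<^sub>E {1..l}. (\<Inter>i\<in>{1..n}. Wsub i (j i)) \<noteq> {0}}"
  have S: "?S \<subseteq> {1..n} \<rightarrow>\<^sub>E {1..l}" by blast
  have fin: "finite ?S" using S by (rule finite_subset) (simp add: finite_PiE)
  have "card ?S \<le> dim UNIV"
  proof (rule card_le_dim_if_independent_subspaces[OF fin])
    fix j assume j: "j \<in> ?S"
    show "subspace (\<Inter>i\<in>{1..n}. Wsub i (j i))"
    proof (rule subspace_Int)
      fix i assume i: "i \<in> {1..n}"
      then have "j i \<in> {1..l}" using j by blast
      then show "subspace (Wsub i (j i))" using dsum i by (simp add: is_direct_sum_def)
    qed
  next
    fix w assume "\<forall>j\<in>?S. w j \<in> (\<Inter>i\<in>{1..n}. Wsub i (j i))" "(\<Sum>j\<in>?S. w j) = 0"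
    then show "\<forall>j\<in>?S. w j = 0"
      by (rule direct_sum_intersections_independent[OF dsum S fin])
  qed simp
  then show ?thesis using r_def by simp
qed

end
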